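(* Let $X$ be a finite set and let $\mathcal{P}=\{X_1,\ldots,X_m\}$ be an $(m,k)$-partition of $X$ such that, for each $i\in\{1,\ldots,k\}$, $\mathcal{P}$ has exactly $m_i\ge1$ blocks of size $n_i\ge1$. Let $A$ be the set of all $k$-tuples $(t_1,\ldots,t_k)$, where each $t_i=(l_{i,1},\ldots,l_{i,m_i})$ is a sequence of length $m_i$ with entries in $\{n_1,\ldots,n_k\}$, such that the multiset of all entries of $t_1,\ldots,t_k$ together is the multiset containing $n_j$ with multiplicity exactly $m_j$ for each $j\in\{1,\ldots,k\}$. For $(t_1,\ldots,t_k)\in A$ let $s_i=l_{i,1}+\cdots+l_{i,m_i}$ be the sum of the entries of $t_i$. Then \[|\Sigma(X,\mathcal{P})|=m_1!\,m_2!\cdots m_k!\sum_{(t_1,\ldots,t_k)\in A} n_1^{\,s_1}n_2^{\,s_2}\cdots n_k^{\,s_k}.\]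
   Context: An $(m,k)$-partition is a partition with exactly $m$ blocks having exactly $k$ distinct block sizes (here $n_1,\ldots,n_k$ are the distinct block sizes). $T(X,\mathcal{P})$ is the semigroup of all maps $f\colon X\to X$ such that every block of $\mathcal{P}$ is mapped by $f$ into some block of $\mathcal{P}$, and $\Sigma(X,\mathcal{P})=\{f\in T(X,\mathcal{P})\mid Xf\cap B\neq\emptyset\text{ for every block } B \text{ of } \mathcal{P}\}$. *)

theory Defs
  imports Main "HOL-Library.FuncSet" "HOL-Library.Disjoint_Sets" "HOL-Library.Multiset"
begin

text \<open>Maps X -> X are represented as extensional functions (value undefined outside X),
so that distinct maps correspond to distinct HOL functions.\<close>

definition T_part :: "'a set \<Rightarrow> 'a set set \<Rightarrow> ('a \<Rightarrow> 'a) set" where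
  "T_part X P = {f \<in> X \<rightarrow>\<^sub>E X. \<forall>B\<in>P. \<exists>C\<in>P. f ` B \<subseteq> C}"

definition Sigma_part :: "'a set \<Rightarrow> 'a set set \<Rightarrow> ('a \<Rightarrow> 'a) set" where
  "Sigma_part X P = {f \<in> T_part X P. \<forall>B\<in>P. f ` X \<inter> B \<noteq> {}}"

definition tuple_set :: "nat \<Rightarrow> (nat \<Rightarrow> nat) \<Rightarrow> (nat \<Rightarrow> nat) \<Rightarrow> (nat \<Rightarrow> nat list) set" where
  "tuple_set k n m = {t. (\<forall>i\<in>{1..k}. length (t i) = m i \<and> set (t i) \<subseteq> n ` {1..k})
      \<and> (\<forall>i. i \<notin> {1..k} \<longrightarrow> t i = [])
      \<and> (\<Sum>i\<in>{1..k}. mset (t i)) = (\<Sum>j\<in>{1..k}. replicate_mset (m j) (n j))}"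

end

theory Submission
  imports Defs "HOL-Combinatorics.Permutations"
begin

text \<open>
  A map \<open>f \<in> \<Sigma>(X, P)\<close> sends every block into a block and its image meets every block, so the
  induced map \<open>\<beta>\<close> on blocks is a surjection of the finite set \<open>P\<close> onto itself, i.e. a
  permutation. The maps inducing a given \<open>\<beta>\<close> form a product set with
  \<open>\<Prod>\<^sub>B |\<beta> B| ^ |B|\<close> elements; in terms of \<open>\<tau> = \<beta>\<inverse>\<close> this is \<open>\<Prod>\<^sub>C |C| ^ |\<tau> C|\<close>.
  Number the blocks of size \<open>n\<^sub>i\<close> by the pairs \<open>(i, a)\<close> with \<open>a < m\<^sub>i\<close>. Then the weight of
  \<open>\<tau>\<close> is \<open>\<Prod>\<^sub>i n\<^sub>i ^ s\<^sub>i\<close>, where \<open>t\<^sub>i\<close> lists the sizes of the blocks that are mapped into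
  the blocks of size \<open>n\<^sub>i\<close>. The tuples arising in this way are exactly the elements of \<open>A\<close>,
  and two permutations give the same tuple iff they differ by a permutation preserving
  block sizes; there are \<open>m\<^sub>1! \<cdots> m\<^sub>k!\<close> of those.
\<close>

section \<open>Permutations preserving a labelling\<close>

lemma bij_betw_glue_fibres:
  assumes "\<And>v. bij_betw (g v) {x \<in> A. c x = v} {y \<in> B. d y = v}"
  shows "bij_betw (\<lambda>x. g (c x) x) A B"
proof (rule bij_betw_imageI)
  have maps_to: "g (c x) x \<in> B \<and> d (g (c x) x) = c x" if "x \<in> A" for x
    using bij_betwE[OF assms[of "c x"]] that by blast
  show "inj_on (\<lambda>x. g (c x) x) A"
  proof (rule inj_onI)
    fix x y assume x: "x \<in> A" and y: "y \<in> A" and eq: "g (c x) x = g (c y) y"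
    then have "c x = c y" using maps_to by metis
    then show "x = y"
      using eq x y bij_betw_imp_inj_on[OF assms[of "c x"]] by (auto dest: inj_onD)
  qed
  show "(\<lambda>x. g (c x) x) ` A = B"
  proof (intro equalityI subsetI)
    fix y assume "y \<in> B"
    then obtain x where "x \<in> A" "c x = d y" "y = g (d y) x"
      using bij_betw_imp_surj_on[OF assms[of "d y"]] by blast
    then show "y \<in> (\<lambda>x. g (c x) x) ` A" by force
  qed (use maps_to in blast)
qed

lemma ex_bij_betw_fibres:
  assumes "finite A" "finite B" and "\<And>v. card {x \<in> A. c x = v} = card {y \<in> B. d y = v}"
  obtains h where "bij_betw h A B" "\<And>x. x \<in> A \<Longrightarrow> d (h x) = c x"
proof -
  have "\<exists>g. bij_betw g {x \<in> A. c x = v} {y \<in> B. d y = v}" for v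
    using assms by (intro finite_same_card_bij) auto
  then obtain g where g: "\<And>v. bij_betw (g v) {x \<in> A. c x = v} {y \<in> B. d y = v}"
    by metis
  show thesis
  proof
    show "bij_betw (\<lambda>x. g (c x) x) A B" using g by (rule bij_betw_glue_fibres)
    show "d (g (c x) x) = c x" if "x \<in> A" for x
      using bij_betwE[OF g[of "c x"]] that by blast
  qed
qed

lemma card_fibre_eq_bij_betw:
  assumes "bij_betw h A B"
  shows "card {x \<in> A. c (h x) = v} = card {y \<in> B. c y = v}"
proof -
  have "h ` {x \<in> A. c (h x) = v} = {y \<in> B. c y = v}"
    using assms by (auto simp: bij_betw_def)
  moreover have "inj_on h {x \<in> A. c (h x) = v}"
    using bij_betw_imp_inj_on[OF assms] by (rule inj_on_subset) auto
  ultimately show ?thesis by (metis card_image)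
qed

lemma permutes_restrict_fibre:
  assumes "\<pi> permutes A" "\<forall>x\<in>A. d (\<pi> x) = d x"
  shows "restrict_id \<pi> {x \<in> A. d x = v} permutes {x \<in> A. d x = v}"
proof (rule permutes_restrict_id)
  let ?D = "{x \<in> A. d x = v}"
  have "\<pi> ` ?D \<subseteq> ?D"
    using assms by (auto simp: permutes_in_image)
  moreover have "?D \<subseteq> \<pi> ` ?D"
  proof
    fix y assume y: "y \<in> ?D"
    then obtain x where "x \<in> A" "y = \<pi> x"
      using permutes_image[OF assms(1)] by auto
    then show "y \<in> \<pi> ` ?D" using y assms(2) by auto
  qed
  moreover have "inj_on \<pi> ?D" using assms(1) by (rule permutes_inj_on)
  ultimately show "bij_betw \<pi> ?D ?D" by (simp add: bij_betw_def)
qed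

lemma permutes_glue_fibres:
  assumes "\<And>v. v \<in> d ` A \<Longrightarrow> G v permutes {x \<in> A. d x = v}"
  shows "(\<lambda>x. if x \<in> A then G (d x) x else x) permutes A"
    and "x \<in> A \<Longrightarrow> d (G (d x) x) = d x"
proof -
  have "bij_betw (G v) {x \<in> A. d x = v} {x \<in> A. d x = v}" for v
  proof (cases "v \<in> d ` A")
    case True
    then show ?thesis using assms by (simp add: permutes_imp_bij)
  next
    case False
    then have "{x \<in> A. d x = v} = {}" by auto
    then show ?thesis unfolding bij_betw_def by (simp only: inj_on_empty image_empty)
  qed
  then have "bij_betw (\<lambda>x. G (d x) x) A A" by (rule bij_betw_glue_fibres)
  then have "bij_betw (\<lambda>x. if x \<in> A then G (d x) x else x) A A"
    by (rule bij_betw_cong[THEN iffD1, rotated]) simp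
  then show "(\<lambda>x. if x \<in> A then G (d x) x else x) permutes A"
    by (rule bij_imp_permutes) simp
next
  assume x: "x \<in> A"
  then have "d x \<in> d ` A" by simp
  then have perm: "G (d x) permutes {y \<in> A. d y = d x}" by (rule assms)
  have "x \<in> {y \<in> A. d y = d x}" using x by simp
  then have "G (d x) x \<in> {y \<in> A. d y = d x}" by (simp only: permutes_in_image[OF perm])
  then show "d (G (d x) x) = d x" by simp
qed

lemma card_fibre_preserving_permutes:
  assumes "finite A"
  shows "card {\<pi>. \<pi> permutes A \<and> (\<forall>x\<in>A. d (\<pi> x) = d x)}
           = (\<Prod>v\<in>d ` A. fact (card {x \<in> A. d x = v}))"
proof -
  define D where "D v = {x \<in> A. d x = v}" for v
  let ?Stab = "{\<pi>. \<pi> permutes A \<and> (\<forall>x\<in>A. d (\<pi> x) = d x)}"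
  let ?Fibrewise = "\<Pi>\<^sub>E v\<in>d ` A. {p. p permutes D v}"
  let ?restrict = "\<lambda>\<pi>. \<lambda>v\<in>d ` A. restrict_id \<pi> (D v)"
  let ?glue = "\<lambda>G x. if x \<in> A then G (d x) x else x"
  have "bij_betw ?restrict ?Stab ?Fibrewise"
  proof (rule bij_betw_byWitness[where f' = ?glue])
    show "\<forall>\<pi>\<in>?Stab. ?glue (?restrict \<pi>) = \<pi>"
    proof (intro ballI ext)
      fix \<pi> x assume "\<pi> \<in> ?Stab"
      then have "\<pi> permutes A" by simp
      then show "?glue (?restrict \<pi>) x = \<pi> x"
        by (cases "x \<in> A") (simp_all add: D_def permutes_not_in)
    qed
    show "\<forall>G\<in>?Fibrewise. ?restrict (?glue G) = G"
    proof (intro ballI, rule ext)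
      fix G v assume G: "G \<in> ?Fibrewise"
      show "?restrict (?glue G) v = G v"
      proof (cases "v \<in> d ` A")
        case True
        then have "G v permutes D v" using G by blast
        then have "restrict_id (?glue G) (D v) x = G v x" for x
          by (cases "x \<in> D v") (simp_all add: D_def permutes_not_in)
        then show ?thesis using True by (simp add: fun_eq_iff)
      next
        case False
        then show ?thesis using PiE_arb[OF G False] by simp
      qed
    qed
    show "?restrict ` ?Stab \<subseteq> ?Fibrewise"
      by (auto simp: D_def intro: permutes_restrict_fibre)
    show "?glue ` ?Fibrewise \<subseteq> ?Stab"
    proof (rule image_subsetI)
      fix G assume "G \<in> ?Fibrewise"
      then have G: "\<And>v. v \<in> d ` A \<Longrightarrow> G v permutes {x \<in> A. d x = v}" by (auto simp: D_def)
      show "?glue G \<in> ?Stab" using permutes_glue_fibres[OF G] by simp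
    qed
  qed
  then have "card ?Stab = card ?Fibrewise" by (rule bij_betw_same_card)
  also have "\<dots> = (\<Prod>v\<in>d ` A. fact (card (D v)))"
    using assms by (simp add: card_PiE card_permutations D_def)
  finally show ?thesis by (simp add: D_def)
qed

text \<open>The permutations relabelling \<open>c\<close> into \<open>d\<close> form a coset of the stabiliser of \<open>d\<close>.\<close>

lemma card_relabelling_permutes:
  assumes "finite A" and "\<And>v. card {x \<in> A. c x = v} = card {x \<in> A. d x = v}"
  shows "card {\<pi>. \<pi> permutes A \<and> (\<forall>x\<in>A. d (\<pi> x) = c x)}
           = (\<Prod>v\<in>d ` A. fact (card {x \<in> A. d x = v}))"
proof -
  obtain h where h: "bij_betw h A A" "\<And>x. x \<in> A \<Longrightarrow> d (h x) = c x"
    using ex_bij_betw_fibres[OF assms(1,1,2)] by blast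
  define \<pi>\<^sub>0 where "\<pi>\<^sub>0 = restrict_id h A"
  have \<pi>\<^sub>0: "\<pi>\<^sub>0 permutes A" "\<And>x. x \<in> A \<Longrightarrow> d (\<pi>\<^sub>0 x) = c x"
    using permutes_restrict_id[OF h(1)] h(2) by (simp_all add: \<pi>\<^sub>0_def)
  let ?Stab = "{\<sigma>. \<sigma> permutes A \<and> (\<forall>x\<in>A. d (\<sigma> x) = d x)}"
  let ?Rel = "{\<pi>. \<pi> permutes A \<and> (\<forall>x\<in>A. d (\<pi> x) = c x)}"
  have "bij_betw (\<lambda>\<sigma>. \<sigma> \<circ> \<pi>\<^sub>0) ?Stab ?Rel"
  proof (rule bij_betw_byWitness[where f' = "\<lambda>\<pi>. \<pi> \<circ> inv \<pi>\<^sub>0"])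
    show "\<forall>\<sigma>\<in>?Stab. \<sigma> \<circ> \<pi>\<^sub>0 \<circ> inv \<pi>\<^sub>0 = \<sigma>" "\<forall>\<pi>\<in>?Rel. \<pi> \<circ> inv \<pi>\<^sub>0 \<circ> \<pi>\<^sub>0 = \<pi>"
      using permutes_inv_o[OF \<pi>\<^sub>0(1)] by (simp_all add: comp_assoc)
    show "(\<lambda>\<sigma>. \<sigma> \<circ> \<pi>\<^sub>0) ` ?Stab \<subseteq> ?Rel"
    proof (rule image_subsetI)
      fix \<sigma> assume "\<sigma> \<in> ?Stab"
      then have \<sigma>: "\<sigma> permutes A" "\<forall>x\<in>A. d (\<sigma> x) = d x" by simp_all
      have "d (\<sigma> (\<pi>\<^sub>0 x)) = c x" if "x \<in> A" for x
        using that \<sigma>(2) \<pi>\<^sub>0 by (simp add: permutes_in_image)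
      then show "\<sigma> \<circ> \<pi>\<^sub>0 \<in> ?Rel"
        using permutes_compose[OF \<pi>\<^sub>0(1) \<sigma>(1)] by simp
    qed
    show "(\<lambda>\<pi>. \<pi> \<circ> inv \<pi>\<^sub>0) ` ?Rel \<subseteq> ?Stab"
    proof (rule image_subsetI)
      fix \<pi> assume "\<pi> \<in> ?Rel"
      then have \<pi>: "\<pi> permutes A" "\<forall>x\<in>A. d (\<pi> x) = c x" by simp_all
      have "d (\<pi> (inv \<pi>\<^sub>0 x)) = d x" if "x \<in> A" for x
      proof -
        have "inv \<pi>\<^sub>0 x \<in> A"
          using that permutes_inv[OF \<pi>\<^sub>0(1)] by (simp add: permutes_in_image)
        then have "d (\<pi> (inv \<pi>\<^sub>0 x)) = d (\<pi>\<^sub>0 (inv \<pi>\<^sub>0 x))" using \<pi>(2) \<pi>\<^sub>0(2) by simp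
        then show ?thesis by (simp add: permutes_inverses[OF \<pi>\<^sub>0(1)])
      qed
      then show "\<pi> \<circ> inv \<pi>\<^sub>0 \<in> ?Stab"
        using \<pi>(1) \<pi>\<^sub>0(1) by (simp add: permutes_compose permutes_inv)
    qed
  qed
  then have "card ?Rel = card ?Stab" by (rule bij_betw_same_card[symmetric])
  also have "\<dots> = (\<Prod>v\<in>d ` A. fact (card {x \<in> A. d x = v}))"
    by (rule card_fibre_preserving_permutes[OF assms(1)])
  finally show ?thesis .
qed

section \<open>Maps compatible with a partition\<close>

lemma partition_on_block_eq:
  assumes "partition_on X P" "B \<in> P" "C \<in> P" "z \<in> B" "z \<in> C"
  shows "B = C"
  using assms partition_onD2 disjointD by blast

lemma partition_on_the_block:
  assumes "partition_on X P" "B \<in> P" "z \<in> B"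
  shows "(THE C. C \<in> P \<and> z \<in> C) = B"
proof (rule the_equality)
  show "B \<in> P \<and> z \<in> B" using assms(2,3) ..
  show "C = B" if "C \<in> P \<and> z \<in> C" for C
    using partition_on_block_eq[OF assms(1)] that assms(2,3) by blast
qed

definition block_maps :: "'a set \<Rightarrow> 'a set set \<Rightarrow> ('a set \<Rightarrow> 'a set) \<Rightarrow> ('a \<Rightarrow> 'a) set" where
  "block_maps X P \<beta> = {f \<in> X \<rightarrow>\<^sub>E X. \<forall>B\<in>P. f ` B \<subseteq> \<beta> B}"

lemma block_maps_eq_PiE:
  assumes "partition_on X P" "\<beta> ` P \<subseteq> P"
  shows "block_maps X P \<beta> = (\<Pi>\<^sub>E z\<in>X. \<beta> (THE B. B \<in> P \<and> z \<in> B))"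
proof -
  let ?blk = "\<lambda>z. THE B. B \<in> P \<and> z \<in> B"
  have blk: "?blk z \<in> P" "z \<in> ?blk z" if "z \<in> X" for z
  proof -
    have "z \<in> \<Union>P" using that partition_onD1[OF assms(1)] by simp
    then obtain B where "B \<in> P" "z \<in> B" by blast
    then show "?blk z \<in> P" "z \<in> ?blk z" using partition_on_the_block[OF assms(1)] by simp_all
  qed
  show ?thesis
  proof (intro equalityI subsetI)
    fix f assume f: "f \<in> block_maps X P \<beta>"
    have "f z \<in> \<beta> (?blk z)" if "z \<in> X" for z
      using f blk[OF that] by (auto simp: block_maps_def)
    then show "f \<in> (\<Pi>\<^sub>E z\<in>X. \<beta> (?blk z))"
      using f by (simp add: block_maps_def PiE_iff)
  next
    fix f assume f: "f \<in> (\<Pi>\<^sub>E z\<in>X. \<beta> (?blk z))"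
    have "\<beta> (?blk z) \<subseteq> X" if "z \<in> X" for z
      using blk[OF that] assms(2) partition_onD1[OF assms(1)] by blast
    then have "f \<in> X \<rightarrow>\<^sub>E X" using f by (auto simp: PiE_iff)
    moreover have "f ` B \<subseteq> \<beta> B" if "B \<in> P" for B
    proof
      fix y assume "y \<in> f ` B"
      then obtain z where z: "z \<in> B" "y = f z" by blast
      then have "z \<in> X" using that partition_onD1[OF assms(1)] by blast
      then have "f z \<in> \<beta> (?blk z)" using f by (simp add: PiE_iff)
      then show "y \<in> \<beta> B" using z partition_on_the_block[OF assms(1) that] by simp
    qed
    ultimately show "f \<in> block_maps X P \<beta>" by (simp add: block_maps_def)
  qed
qed

lemma card_block_maps:
  assumes "finite X" "partition_on X P" "\<beta> ` P \<subseteq> P"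
  shows "card (block_maps X P \<beta>) = (\<Prod>B\<in>P. card (\<beta> B) ^ card B)"
proof -
  have "card (block_maps X P \<beta>) = (\<Prod>z\<in>X. card (\<beta> (THE B. B \<in> P \<and> z \<in> B)))"
    by (simp add: block_maps_eq_PiE[OF assms(2,3)] card_PiE assms(1))
  also have "\<dots> = (\<Prod>B\<in>P. \<Prod>z\<in>B. card (\<beta> (THE B. B \<in> P \<and> z \<in> B)))"
    by (rule prod.partition[OF assms(1,2)])
  also have "\<dots> = (\<Prod>B\<in>P. card (\<beta> B) ^ card B)"
    by (intro prod.cong refl) (simp add: partition_on_the_block[OF assms(2)])
  finally show ?thesis .
qed

lemma block_maps_disjoint:
  assumes "partition_on X P" "\<beta> permutes P" "\<beta>' permutes P"
    and "f \<in> block_maps X P \<beta>" "f \<in> block_maps X P \<beta>'"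
  shows "\<beta> = \<beta>'"
proof
  fix B show "\<beta> B = \<beta>' B"
  proof (cases "B \<in> P")
    case True
    then obtain z where "z \<in> B" using partition_onD3[OF assms(1)] by fastforce
    then have "f z \<in> \<beta> B" "f z \<in> \<beta>' B"
      using True assms(4,5) by (auto simp: block_maps_def image_subset_iff)
    moreover have "\<beta> B \<in> P" "\<beta>' B \<in> P"
      using True assms(2,3) by (simp_all add: permutes_in_image)
    ultimately show ?thesis using partition_on_block_eq[OF assms(1)] by blast
  next
    case False
    then show ?thesis using assms(2,3) by (simp add: permutes_not_in)
  qed
qed

lemma Sigma_part_block_permutation:
  assumes "finite X" "partition_on X P" "f \<in> Sigma_part X P"
  obtains \<beta> where "\<beta> permutes P" "f \<in> block_maps X P \<beta>"
proof -
  have f_maps: "f \<in> X \<rightarrow>\<^sub>E X" and into_block: "\<And>B. B \<in> P \<Longrightarrow> \<exists>C. C \<in> P \<and> f ` B \<subseteq> C"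
    and hits: "\<And>C. C \<in> P \<Longrightarrow> f ` X \<inter> C \<noteq> {}"
    using assms(3) by (auto simp: Sigma_part_def T_part_def)
  define \<beta> where "\<beta> = restrict_id (\<lambda>B. SOME C. C \<in> P \<and> f ` B \<subseteq> C) P"
  have \<beta>: "\<beta> B \<in> P" "f ` B \<subseteq> \<beta> B" if "B \<in> P" for B
    using someI_ex[OF into_block[OF that]] that by (simp_all add: \<beta>_def)
  have "P \<subseteq> \<beta> ` P"
  proof
    fix C assume "C \<in> P"
    then obtain z where z: "z \<in> X" "f z \<in> C" using hits by blast
    have "z \<in> \<Union>P" using z(1) partition_onD1[OF assms(2)] by simp
    then obtain B where B: "B \<in> P" "z \<in> B" by blast
    then have "f z \<in> \<beta> B" using \<beta>(2) by blast
    then have "\<beta> B = C" using partition_on_block_eq[OF assms(2) \<beta>(1)[OF B(1)] \<open>C \<in> P\<close> _ z(2)] by blast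
    then show "C \<in> \<beta> ` P" using B(1) by blast
  qed
  then have "\<beta> ` P = P" using \<beta>(1) by blast
  moreover have "finite P" using assms(1,2) by (rule finite_elements)
  ultimately have "bij_betw \<beta> P P" by (simp add: bij_betw_def eq_card_imp_inj_on)
  then have "\<beta> permutes P" by (rule bij_imp_permutes) (simp add: \<beta>_def)
  moreover have "f \<in> block_maps X P \<beta>" using f_maps \<beta>(2) by (simp add: block_maps_def)
  ultimately show thesis by (rule that)
qed

lemma block_maps_subset_Sigma_part:
  assumes "partition_on X P" "\<beta> permutes P"
  shows "block_maps X P \<beta> \<subseteq> Sigma_part X P"
proof
  fix f assume "f \<in> block_maps X P \<beta>"
  then have f_maps: "f \<in> X \<rightarrow>\<^sub>E X" and f_blocks: "\<And>B. B \<in> P \<Longrightarrow> f ` B \<subseteq> \<beta> B"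
    by (simp_all add: block_maps_def)
  have "\<exists>C\<in>P. f ` B \<subseteq> C" if "B \<in> P" for B
  proof
    show "\<beta> B \<in> P" using that assms(2) by (simp add: permutes_in_image)
  qed (rule f_blocks[OF that])
  moreover have "f ` X \<inter> C \<noteq> {}" if C: "C \<in> P" for C
  proof -
    have "C \<in> \<beta> ` P" using C permutes_image[OF assms(2)] by simp
    then obtain B where B: "B \<in> P" "\<beta> B = C" by blast
    then have "B \<noteq> {}" using partition_onD3[OF assms(1)] by blast
    then obtain z where z: "z \<in> B" by blast
    have "z \<in> \<Union>P" using B(1) z by blast
    then have "z \<in> X" using partition_onD1[OF assms(1)] by simp
    moreover have "f z \<in> C" using f_blocks[OF B(1)] z B(2) by blast
    ultimately show ?thesis by blast
  qed
  ultimately show "f \<in> Sigma_part X P"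
    using f_maps unfolding Sigma_part_def T_part_def by blast
qed

lemma Sigma_part_eq_UN_block_maps:
  assumes "finite X" "partition_on X P"
  shows "Sigma_part X P = (\<Union>\<beta>\<in>{\<beta>. \<beta> permutes P}. block_maps X P \<beta>)"
  using Sigma_part_block_permutation[OF assms] block_maps_subset_Sigma_part[OF assms(2)] by blast

lemma card_Sigma_part:
  assumes "finite X" "partition_on X P"
  shows "card (Sigma_part X P) = (\<Sum>\<tau> | \<tau> permutes P. \<Prod>C\<in>P. card C ^ card (\<tau> C))"
proof -
  have "finite P" using assms by (rule finite_elements)
  have "card (Sigma_part X P) = (\<Sum>\<beta> | \<beta> permutes P. card (block_maps X P \<beta>))"
    unfolding Sigma_part_eq_UN_block_maps[OF assms]
  proof (rule card_UN_disjoint)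
    show "finite {\<beta>. \<beta> permutes P}" using \<open>finite P\<close> by (rule finite_permutations)
    show "\<forall>\<beta>\<in>{\<beta>. \<beta> permutes P}. finite (block_maps X P \<beta>)"
      using assms(1)
      by (auto simp: block_maps_def intro: finite_subset[OF _ finite_PiE[of X "\<lambda>_. X"]])
    show "\<forall>\<beta>\<in>{\<beta>. \<beta> permutes P}. \<forall>\<beta>'\<in>{\<beta>. \<beta> permutes P}. \<beta> \<noteq> \<beta>' \<longrightarrow>
        block_maps X P \<beta> \<inter> block_maps X P \<beta>' = {}"
      using block_maps_disjoint[OF assms(2)] by blast
  qed
  also have "\<dots> = (\<Sum>\<beta> | \<beta> permutes P. \<Prod>B\<in>P. card (\<beta> B) ^ card B)"
    using card_block_maps[OF assms] by (simp add: permutes_image)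
  also have "\<dots> = (\<Sum>\<tau> | \<tau> permutes P. \<Prod>B\<in>P. card (inv \<tau> B) ^ card B)"
    by (rule sum_permutations_inverse)
  also have "\<dots> = (\<Sum>\<tau> | \<tau> permutes P. \<Prod>C\<in>P. card C ^ card (\<tau> C))"
  proof (rule sum.cong[OF refl])
    fix \<tau> assume "\<tau> \<in> {\<tau>. \<tau> permutes P}"
    then have \<tau>: "\<tau> permutes P" by simp
    show "(\<Prod>B\<in>P. card (inv \<tau> B) ^ card B) = (\<Prod>C\<in>P. card C ^ card (\<tau> C))"
      by (subst prod.permute[OF \<tau>]) (simp add: permutes_inverses[OF \<tau>])
  qed
  finally show ?thesis .
qed

section \<open>Numbering the blocks by their sizes\<close>

text \<open>
  The pair \<open>(i, a)\<close> with \<open>a < m i\<close> stands for the \<open>a\<close>-th block of size \<open>n i\<close>.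
\<close>

definition index_pairs :: "nat \<Rightarrow> (nat \<Rightarrow> nat) \<Rightarrow> (nat \<times> nat) set" where
  "index_pairs k m = Sigma {1..k} (\<lambda>i. {..<m i})"

definition tuple_of :: "nat \<Rightarrow> (nat \<Rightarrow> nat) \<Rightarrow> (nat \<times> nat \<Rightarrow> nat) \<Rightarrow> nat \<Rightarrow> nat list" where
  "tuple_of k m c i = (if i \<in> {1..k} then map (\<lambda>a. c (i, a)) [0..<m i] else [])"

lemma finite_index_pairs [simp]: "finite (index_pairs k m)"
  by (simp add: index_pairs_def)

lemma card_index_pairs_fibre:
  assumes "inj_on n {1..k}" "j \<in> {1..k}"
  shows "card {x \<in> index_pairs k m. n (fst x) = n j} = m j"
proof -
  have "{x \<in> index_pairs k m. n (fst x) = n j} = {j} \<times> {..<m j}"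
    using assms by (auto simp: index_pairs_def inj_on_eq_iff)
  then show ?thesis by simp
qed

lemma prod_fact_card_index_pairs_fibres:
  assumes "inj_on n {1..k}"
  shows "(\<Prod>v\<in>(\<lambda>x. n (fst x)) ` index_pairs k m. fact (card {x \<in> index_pairs k m. n (fst x) = v}))
           = (\<Prod>i\<in>{1..k}. fact (m i))"
proof -
  let ?I = "index_pairs k m"
  have "(\<Prod>v\<in>(\<lambda>x. n (fst x)) ` ?I. fact (card {x \<in> ?I. n (fst x) = v}))
      = (\<Prod>v\<in>n ` {1..k}. fact (card {x \<in> ?I. n (fst x) = v}))"
  proof (rule prod.mono_neutral_left)
    show "(\<lambda>x. n (fst x)) ` ?I \<subseteq> n ` {1..k}" by (auto simp: index_pairs_def)
    show "\<forall>v\<in>n ` {1..k} - (\<lambda>x. n (fst x)) ` ?I. fact (card {x \<in> ?I. n (fst x) = v}) = 1"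
    proof
      fix v assume "v \<in> n ` {1..k} - (\<lambda>x. n (fst x)) ` ?I"
      then have "{x \<in> ?I. n (fst x) = v} = {}" by blast
      then show "fact (card {x \<in> ?I. n (fst x) = v}) = 1" by (metis card.empty fact_0)
    qed
  qed simp
  also have "\<dots> = (\<Prod>i\<in>{1..k}. fact (card {x \<in> ?I. n (fst x) = n i}))"
    unfolding prod.reindex[OF assms] comp_def ..
  also have "\<dots> = (\<Prod>i\<in>{1..k}. fact (m i))"
  proof (rule prod.cong[OF refl])
    fix i assume "i \<in> {1..k}"
    then show "fact (card {x \<in> ?I. n (fst x) = n i}) = fact (m i)"
      by (simp only: card_index_pairs_fibre[OF assms])
  qed
  finally show ?thesis .
qed

lemma obtain_block_enumeration:
  assumes "finite P" "inj_on n {1..k}" "s ` P = n ` {1..k}"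
    and "\<forall>i\<in>{1..k}. card {B \<in> P. s B = n i} = m i"
  obtains e where "bij_betw e (index_pairs k m) P"
    "\<And>x. x \<in> index_pairs k m \<Longrightarrow> s (e x) = n (fst x)"
proof (rule ex_bij_betw_fibres)
  show "card {x \<in> index_pairs k m. n (fst x) = v} = card {B \<in> P. s B = v}" for v
  proof (cases "v \<in> n ` {1..k}")
    case True
    then obtain j where "j \<in> {1..k}" "v = n j" by blast
    then show ?thesis using assms(4) card_index_pairs_fibre[OF assms(2)] by simp
  next
    case False
    then have "{x \<in> index_pairs k m. n (fst x) = v} = {}" "{B \<in> P. s B = v} = {}"
      using assms(3) by (auto simp: index_pairs_def)
    then show ?thesis by (metis card.empty)
  qed
qed (use assms(1) in simp_all)

lemma sum_permutes_bij_betw: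
  assumes "bij_betw e I P"
  shows "(\<Sum>\<tau> | \<tau> permutes P. \<Prod>C\<in>P. w C (\<tau> C))
           = (\<Sum>\<pi> | \<pi> permutes I. \<Prod>x\<in>I. w (e x) (e (\<pi> x)))"
proof -
  let ?transport = "\<lambda>\<pi> C. if C \<in> P then e (\<pi> (inv_into I e C)) else C"
  have "(\<Sum>\<tau> | \<tau> permutes P. \<Prod>C\<in>P. w C (\<tau> C))
      = (\<Sum>\<pi> | \<pi> permutes I. \<Prod>C\<in>P. w C (?transport \<pi> C))"
    by (rule sum.reindex_bij_betw[OF bij_betw_permutations[OF assms], symmetric])
  also have "\<dots> = (\<Sum>\<pi> | \<pi> permutes I. \<Prod>x\<in>I. w (e x) (e (\<pi> x)))"
  proof (rule sum.cong[OF refl])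
    fix \<pi> show "(\<Prod>C\<in>P. w C (?transport \<pi> C)) = (\<Prod>x\<in>I. w (e x) (e (\<pi> x)))"
      using bij_betwE[OF assms] bij_betw_inv_into_left[OF assms]
      by (simp add: prod.reindex_bij_betw[OF assms, symmetric])
  qed
  finally show ?thesis .
qed

lemma count_mset_map_upt: "count (mset (map g [0..<M])) v = card {a \<in> {..<M}. g a = v}"
proof -
  have "count (mset (map g [0..<M])) v = count (image_mset g (mset_set {..<M})) v"
    by (simp add: lessThan_atLeast0)
  also have "\<dots> = card (g -` {v} \<inter> {..<M})"
    by (simp add: count_image_mset)
  also have "g -` {v} \<inter> {..<M} = {a \<in> {..<M}. g a = v}" by auto
  finally show ?thesis .
qed

lemma count_sum_mset_tuple_of:
  "count (\<Sum>i\<in>{1..k}. mset (tuple_of k m c i)) v = card {x \<in> index_pairs k m. c x = v}"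
proof -
  have "count (\<Sum>i\<in>{1..k}. mset (tuple_of k m c i)) v
      = (\<Sum>i\<in>{1..k}. card {a \<in> {..<m i}. c (i, a) = v})"
    by (simp add: count_sum tuple_of_def count_mset_map_upt del: mset_map)
  also have "\<dots> = card (Sigma {1..k} (\<lambda>i. {a \<in> {..<m i}. c (i, a) = v}))"
    by (rule card_SigmaI[symmetric]) auto
  also have "Sigma {1..k} (\<lambda>i. {a \<in> {..<m i}. c (i, a) = v}) = {x \<in> index_pairs k m. c x = v}"
    by (auto simp: index_pairs_def)
  finally show ?thesis .
qed

lemma tuple_of_in_tuple_set_iff:
  "tuple_of k m c \<in> tuple_set k n m \<longleftrightarrow>
     (\<forall>v. card {x \<in> index_pairs k m. c x = v} = card {x \<in> index_pairs k m. n (fst x) = v})"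
  (is "_ \<longleftrightarrow> ?same_fibres")
proof -
  have "(\<Sum>j\<in>{1..k}. replicate_mset (m j) (n j))
      = (\<Sum>i\<in>{1..k}. mset (tuple_of k m (\<lambda>x. n (fst x)) i))"
    by (intro sum.cong refl) (simp add: tuple_of_def map_replicate_const)
  then have mset_iff: "(\<Sum>i\<in>{1..k}. mset (tuple_of k m c i))
      = (\<Sum>j\<in>{1..k}. replicate_mset (m j) (n j)) \<longleftrightarrow> ?same_fibres"
    unfolding multiset_eq_iff count_sum_mset_tuple_of by simp
  have set_ok: "set (tuple_of k m c i) \<subseteq> n ` {1..k}" if ?same_fibres for i
  proof
    fix v assume "v \<in> set (tuple_of k m c i)"
    then obtain a where "i \<in> {1..k}" "a < m i" "c (i, a) = v"
      by (auto simp: tuple_of_def split: if_splits)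
    then have "(i, a) \<in> {x \<in> index_pairs k m. c x = v}" by (simp add: index_pairs_def)
    then have "{x \<in> index_pairs k m. c x = v} \<noteq> {}" by blast
    then have "card {x \<in> index_pairs k m. c x = v} \<noteq> 0" by (simp add: card_eq_0_iff)
    then have "card {x \<in> index_pairs k m. n (fst x) = v} \<noteq> 0" using that by simp
    then obtain x where "x \<in> index_pairs k m" "n (fst x) = v" by (auto simp: card_eq_0_iff)
    then show "v \<in> n ` {1..k}" by (auto simp: index_pairs_def)
  qed
  have "length (tuple_of k m c i) = m i" if "i \<in> {1..k}" for i
    using that by (simp add: tuple_of_def)
  moreover have "tuple_of k m c i = []" if "i \<notin> {1..k}" for i
    by (simp only: tuple_of_def if_not_P[OF that])
  ultimately show ?thesis
    using set_ok mset_iff unfolding tuple_set_def by blast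
qed

lemma tuple_of_nth:
  assumes "t \<in> tuple_set k n m"
  shows "tuple_of k m (\<lambda>x. t (fst x) ! snd x) = t"
proof
  fix i show "tuple_of k m (\<lambda>x. t (fst x) ! snd x) i = t i"
  proof (cases "i \<in> {1..k}")
    case True
    then have "length (t i) = m i" using assms by (simp add: tuple_set_def)
    then show ?thesis using True map_nth[of "t i"] by (simp add: tuple_of_def)
  next
    case False
    then have "t i = []" using assms by (simp add: tuple_set_def)
    then show ?thesis by (simp only: tuple_of_def if_not_P[OF False])
  qed
qed

lemma tuple_of_eq_iff:
  "tuple_of k m c = tuple_of k m c' \<longleftrightarrow> (\<forall>x\<in>index_pairs k m. c x = c' x)"
proof
  assume eq: "tuple_of k m c = tuple_of k m c'"
  show "\<forall>x\<in>index_pairs k m. c x = c' x"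
  proof
    fix x assume x: "x \<in> index_pairs k m"
    then have "fst x \<in> {1..k}" "snd x < m (fst x)" by (auto simp: index_pairs_def)
    then show "c x = c' x"
      using fun_cong[OF eq, of "fst x"] by (cases x) (simp add: tuple_of_def map_eq_conv)
  qed
next
  assume "\<forall>x\<in>index_pairs k m. c x = c' x"
  then show "tuple_of k m c = tuple_of k m c'"
    by (auto simp: tuple_of_def index_pairs_def fun_eq_iff)
qed

lemma prod_power_tuple_of:
  "(\<Prod>x\<in>index_pairs k m. b (fst x) ^ c x) = (\<Prod>i\<in>{1..k}. b i ^ sum_list (tuple_of k m c i))"
proof -
  have "(\<Prod>x\<in>index_pairs k m. b (fst x) ^ c x) = (\<Prod>i\<in>{1..k}. \<Prod>a<m i. b i ^ c (i, a))"
    unfolding index_pairs_def by (subst prod.Sigma) (simp_all add: case_prod_beta)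
  also have "\<dots> = (\<Prod>i\<in>{1..k}. b i ^ (\<Sum>a<m i. c (i, a)))"
    by (simp add: power_sum)
  also have "\<dots> = (\<Prod>i\<in>{1..k}. b i ^ sum_list (tuple_of k m c i))"
    by (intro prod.cong refl)
       (simp add: tuple_of_def sum_set_upt_conv_sum_list_nat[symmetric] lessThan_atLeast0)
  finally show ?thesis .
qed

lemma tuple_of_permutes_in_tuple_set:
  assumes "\<pi> permutes index_pairs k m"
  shows "tuple_of k m (\<lambda>x. n (fst (\<pi> x))) \<in> tuple_set k n m"
proof -
  have "card {x \<in> index_pairs k m. n (fst (\<pi> x)) = v} = card {x \<in> index_pairs k m. n (fst x) = v}"
    for v
    using permutes_imp_bij[OF assms] by (rule card_fibre_eq_bij_betw)
  then show ?thesis unfolding tuple_of_in_tuple_set_iff by simp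
qed

lemma card_permutes_tuple_of:
  assumes "inj_on n {1..k}" "t \<in> tuple_set k n m"
  shows "card {\<pi>. \<pi> permutes index_pairs k m \<and> tuple_of k m (\<lambda>x. n (fst (\<pi> x))) = t}
           = (\<Prod>i\<in>{1..k}. fact (m i))"
proof -
  let ?I = "index_pairs k m"
  define c where "c = (\<lambda>x. t (fst x) ! snd x)"
  have t_eq: "t = tuple_of k m c" using tuple_of_nth[OF assms(2)] by (simp add: c_def)
  have "{\<pi>. \<pi> permutes ?I \<and> tuple_of k m (\<lambda>x. n (fst (\<pi> x))) = t}
      = {\<pi>. \<pi> permutes ?I \<and> (\<forall>x\<in>?I. n (fst (\<pi> x)) = c x)}"
    unfolding t_eq tuple_of_eq_iff ..
  also have "card \<dots> = (\<Prod>v\<in>(\<lambda>x. n (fst x)) ` ?I. fact (card {x \<in> ?I. n (fst x) = v}))"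
    using assms(2) unfolding t_eq tuple_of_in_tuple_set_iff
    by (intro card_relabelling_permutes) simp_all
  also have "\<dots> = (\<Prod>i\<in>{1..k}. fact (m i))"
    by (rule prod_fact_card_index_pairs_fibres[OF assms(1)])
  finally show ?thesis .
qed

lemma image_tuple_of_permutes:
  assumes "inj_on n {1..k}"
  shows "(\<lambda>\<pi>. tuple_of k m (\<lambda>x. n (fst (\<pi> x)))) ` {\<pi>. \<pi> permutes index_pairs k m}
           = tuple_set k n m"
proof (intro equalityI subsetI)
  fix t assume "t \<in> (\<lambda>\<pi>. tuple_of k m (\<lambda>x. n (fst (\<pi> x)))) ` {\<pi>. \<pi> permutes index_pairs k m}"
  then show "t \<in> tuple_set k n m" using tuple_of_permutes_in_tuple_set by blast
next
  fix t assume t: "t \<in> tuple_set k n m"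
  have "card {\<pi>. \<pi> permutes index_pairs k m \<and> tuple_of k m (\<lambda>x. n (fst (\<pi> x))) = t} \<noteq> 0"
    unfolding card_permutes_tuple_of[OF assms t] by simp
  then obtain \<pi> where "\<pi> permutes index_pairs k m" "tuple_of k m (\<lambda>x. n (fst (\<pi> x))) = t"
    by (metis (mono_tags, lifting) card.empty empty_Collect_eq)
  then show "t \<in> (\<lambda>\<pi>. tuple_of k m (\<lambda>x. n (fst (\<pi> x)))) ` {\<pi>. \<pi> permutes index_pairs k m}"
    by blast
qed

lemma sum_permutes_index_pairs:
  assumes "inj_on n {1..k}"
  shows "(\<Sum>\<pi> | \<pi> permutes index_pairs k m. \<Prod>x\<in>index_pairs k m. n (fst x) ^ n (fst (\<pi> x)))
    = (\<Prod>i\<in>{1..k}. fact (m i)) * (\<Sum>t\<in>tuple_set k n m. \<Prod>i\<in>{1..k}. n i ^ sum_list (t i))"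
proof -
  let ?I = "index_pairs k m"
  let ?Perms = "{\<pi>. \<pi> permutes ?I}"
  let ?tuple = "\<lambda>\<pi>. tuple_of k m (\<lambda>x. n (fst (\<pi> x)))"
  let ?w = "\<lambda>t. \<Prod>i\<in>{1..k}. n i ^ sum_list (t i)"
  have "(\<Sum>\<pi>\<in>?Perms. \<Prod>x\<in>?I. n (fst x) ^ n (fst (\<pi> x))) = (\<Sum>\<pi>\<in>?Perms. ?w (?tuple \<pi>))"
    by (intro sum.cong refl) (rule prod_power_tuple_of)
  also have "\<dots> = (\<Sum>t\<in>?tuple ` ?Perms. \<Sum>\<pi>\<in>{\<pi> \<in> ?Perms. ?tuple \<pi> = t}. ?w (?tuple \<pi>))"
    by (rule sum.image_gen) (simp add: finite_permutations)
  also have "\<dots> = (\<Sum>t\<in>tuple_set k n m. (\<Prod>i\<in>{1..k}. fact (m i)) * ?w t)"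
    unfolding image_tuple_of_permutes[OF assms]
  proof (rule sum.cong[OF refl])
    fix t assume t: "t \<in> tuple_set k n m"
    have "(\<Sum>\<pi>\<in>{\<pi> \<in> ?Perms. ?tuple \<pi> = t}. ?w (?tuple \<pi>))
        = card {\<pi>. \<pi> permutes ?I \<and> ?tuple \<pi> = t} * ?w t"
      by simp
    then show "(\<Sum>\<pi>\<in>{\<pi> \<in> ?Perms. ?tuple \<pi> = t}. ?w (?tuple \<pi>)) = (\<Prod>i\<in>{1..k}. fact (m i)) * ?w t"
      unfolding card_permutes_tuple_of[OF assms t] .
  qed
  finally show ?thesis by (simp add: sum_distrib_left)
qed

theorem theorem6p3:
  fixes X :: "'a set" and P :: "'a set set" and k :: nat and n m :: "nat \<Rightarrow> nat"
  assumes "finite X"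
    and "partition_on X P"
    and "inj_on n {1..k}"
    and "\<forall>i\<in>{1..k}. n i \<ge> 1 \<and> m i \<ge> 1"
    and "card ` P = n ` {1..k}"
    and "\<forall>i\<in>{1..k}. card {B \<in> P. card B = n i} = m i"
  shows "card (Sigma_part X P) =
    (\<Prod>i\<in>{1..k}. fact (m i)) *
    (\<Sum>t\<in>tuple_set k n m. \<Prod>i\<in>{1..k}. n i ^ sum_list (t i))"
proof -
  let ?I = "index_pairs k m"
  have "finite P" using assms(1,2) by (rule finite_elements)
  then obtain e where e: "bij_betw e ?I P" and card_e: "\<And>x. x \<in> ?I \<Longrightarrow> card (e x) = n (fst x)"
    using obtain_block_enumeration[OF _ assms(3,5,6)] by blast
  have "card (Sigma_part X P) = (\<Sum>\<tau> | \<tau> permutes P. \<Prod>C\<in>P. card C ^ card (\<tau> C))"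
    using assms(1,2) by (rule card_Sigma_part)
  also have "\<dots> = (\<Sum>\<pi> | \<pi> permutes ?I. \<Prod>x\<in>?I. card (e x) ^ card (e (\<pi> x)))"
    using e by (rule sum_permutes_bij_betw)
  also have "\<dots> = (\<Sum>\<pi> | \<pi> permutes ?I. \<Prod>x\<in>?I. n (fst x) ^ n (fst (\<pi> x)))"
    by (intro sum.cong prod.cong refl) (simp add: card_e permutes_in_image)
  also have "\<dots> = (\<Prod>i\<in>{1..k}. fact (m i)) * (\<Sum>t\<in>tuple_set k n m. \<Prod>i\<in>{1..k}. n i ^ sum_list (t i))"
    using assms(3) by (rule sum_permutes_index_pairs)
  finally show ?thesis .
qed

end
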